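(* Let $I$ be a set, $\mathcal{E}=(E_i)_{i\in I}$ a family of nonempty sets, $R$ a multiple relation in $\mathcal{E}$, and $J,K\subseteq J_R$ two subsets that are both detachable from $R$. Then $J\cup K$ is detachable from $R$.
   Context: For $J\subseteq I$, $Z_J=\prod_{j\in J}E_j$ ($Z_\emptyset=\{\bullet\}$). A multiple relation is $R=(J_R,G_R)$ with $J_R\subseteq I$, $G_R\subseteq Z_{J_R}$. For $K\subseteq J_R$, $R_{|K}=(K,\{x_{|K}:x\in G_R\})$. $1_J=(J,Z_J)$. Product: $R\bowtie S=(J_R\cup J_S,\{x\in Z_{J_R\cup J_S}: x_{|J_R}\in G_R,\ x_{|J_S}\in G_S\})$. For $J\subseteq J_R$ put $\neg J=J_R\setminus J$; $J$ is detachable from $R$ if $R=R_{|\neg J}\bowtie 1_J$. *)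

theory Defs
  imports "HOL-Library.FuncSet"
begin

text \<open>Tuples in Z_J are extensional functions in PiE J E (value undefined outside J).
A multiple relation is a pair (J_R, G_R).\<close>

type_synonym ('i, 'a) mrel = "'i set \<times> ('i \<Rightarrow> 'a) set"

definition Z :: "('i \<Rightarrow> 'a set) \<Rightarrow> 'i set \<Rightarrow> ('i \<Rightarrow> 'a) set" where
  "Z E J = PiE J E"

definition is_mrel :: "'i set \<Rightarrow> ('i \<Rightarrow> 'a set) \<Rightarrow> ('i, 'a) mrel \<Rightarrow> bool" where
  "is_mrel I E R \<longleftrightarrow> fst R \<subseteq> I \<and> snd R \<subseteq> Z E (fst R)"

definition mrestr :: "('i, 'a) mrel \<Rightarrow> 'i set \<Rightarrow> ('i, 'a) mrel" where
  "mrestr R K = (K, (\<lambda>x. restrict x K) ` snd R)"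

definition mone :: "('i \<Rightarrow> 'a set) \<Rightarrow> 'i set \<Rightarrow> ('i, 'a) mrel" where
  "mone E J = (J, Z E J)"

definition mjoin :: "('i \<Rightarrow> 'a set) \<Rightarrow> ('i, 'a) mrel \<Rightarrow> ('i, 'a) mrel \<Rightarrow> ('i, 'a) mrel" where
  "mjoin E R S = (fst R \<union> fst S,
     {x \<in> Z E (fst R \<union> fst S). restrict x (fst R) \<in> snd R \<and> restrict x (fst S) \<in> snd S})"

definition detachable :: "('i \<Rightarrow> 'a set) \<Rightarrow> ('i, 'a) mrel \<Rightarrow> 'i set \<Rightarrow> bool" where
  "detachable E R J \<longleftrightarrow> J \<subseteq> fst R \<and> R = mjoin E (mrestr R (fst R - J)) (mone E J)"

end

theory Submission
  imports Defs
begin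

text \<open>Detachability of J means that membership in G_R ignores the coordinates in J. If x agrees
  with some g \<in> G_R off J \<union> K, splice x on K with g elsewhere: this tuple agrees with g off K, so it
  lies in G_R; and x agrees with it off J, so x lies in G_R.\<close>

lemma restrict_eq_iff: "restrict x A = restrict y A \<longleftrightarrow> (\<forall>i\<in>A. x i = y i)"
  by (metis restrict_apply' restrict_ext)

lemma detachable_iff_closed_off:
  assumes "snd R \<subseteq> Z E (fst R)" and "J \<subseteq> fst R"
  shows "detachable E R J \<longleftrightarrow>
    (\<forall>x\<in>Z E (fst R). (\<exists>g\<in>snd R. \<forall>i\<in>fst R - J. x i = g i) \<longrightarrow> x \<in> snd R)"
proof -
  obtain A G where R: "R = (A, G)" by (cases R)
  have A: "A - J \<union> J = A" "A \<union> J = A" using assms(2) R by auto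
  have restrict_J: "restrict x J \<in> Z E J" if "x \<in> Z E A" for x
    using that assms(2) R by (auto simp: Z_def PiE_def Pi_def)
  have "detachable E R J \<longleftrightarrow> G = {x \<in> Z E A. restrict x (A - J) \<in> (\<lambda>x. restrict x (A - J)) ` G}"
    using assms(2) restrict_J unfolding detachable_def mjoin_def mrestr_def mone_def R
    by (auto simp: A)
  also have "\<dots> \<longleftrightarrow> (\<forall>x\<in>Z E A. (\<exists>g\<in>G. \<forall>i\<in>A - J. x i = g i) \<longrightarrow> x \<in> G)"
    using assms(1) R by (auto simp: restrict_eq_iff image_iff)
  finally show ?thesis using R by simp
qed

lemma splice_in_Z:
  assumes "x \<in> Z E A" and "g \<in> Z E A" and "K \<subseteq> A"
  shows "(\<lambda>i. if i \<in> K then x i else g i) \<in> Z E A"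
  using assms by (auto simp: Z_def PiE_def Pi_def extensional_def)

theorem mainTheorem3:
  fixes I :: "'i set" and E :: "'i \<Rightarrow> 'a set" and R :: "('i, 'a) mrel" and J K :: "'i set"
  assumes "\<forall>i\<in>I. E i \<noteq> {}"
    and "is_mrel I E R"
    and "J \<subseteq> fst R" and "K \<subseteq> fst R"
    and "detachable E R J" and "detachable E R K"
  shows "detachable E R (J \<union> K)"
proof -
  have G: "snd R \<subseteq> Z E (fst R)" using assms(2) by (simp add: is_mrel_def)
  note closed_J = assms(5)[unfolded detachable_iff_closed_off[OF G assms(3)]]
  note closed_K = assms(6)[unfolded detachable_iff_closed_off[OF G assms(4)]]
  have JK: "J \<union> K \<subseteq> fst R" using assms(3,4) by auto
  show ?thesis unfolding detachable_iff_closed_off[OF G JK]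
  proof (intro ballI impI)
    fix x assume x: "x \<in> Z E (fst R)" and "\<exists>g\<in>snd R. \<forall>i\<in>fst R - (J \<union> K). x i = g i"
    then obtain g where g: "g \<in> snd R" "\<forall>i\<in>fst R - (J \<union> K). x i = g i" by blast
    define y where "y = (\<lambda>i. if i \<in> K then x i else g i)"
    have "y \<in> Z E (fst R)" unfolding y_def using splice_in_Z x g(1) G assms(4) by blast
    moreover have "\<forall>i\<in>fst R - K. y i = g i" by (simp add: y_def)
    ultimately have "y \<in> snd R" using closed_K g(1) by blast
    moreover have "\<forall>i\<in>fst R - J. x i = y i" using g by (auto simp: y_def)
    ultimately show "x \<in> snd R" using closed_J x by blast
  qed
qed

end
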